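(* Let $\mathcal G$ be a real Lie algebra that is nilpotent of step at most $3$, i.e. $[\mathcal G,[\mathcal G,[\mathcal G,\mathcal G]]]=0$. Then there exist a linear endomorphism $f$ of $\mathcal G$ with $f([x,y])-[f(x),f(y)]\in\mathcal Z(\mathcal G)$ for all $x,y$, and an invertible linear endomorphism $d$ of $\mathcal G$ with $d[x,y]=[dx,fy]+[fx,dy]$ for all $x,y$, such that the product $xy:=d^{-1}[fx,dy]$ is left symmetric and compatible with the bracket, i.e. $(xy)z-x(yz)=(yx)z-y(xz)$ and $xy-yx=[x,y]$ for all $x,y,z$. Consequently every connected Lie group with Lie algebra $\mathcal G$ carries a flat torsion-free left invariant affine connection $\nabla$ with $\nabla_{x^+}y^+=(xy)^+$.
   Context: $\mathcal Z(\mathcal G)$ denotes the center of $\mathcal G$; $x^+$ is the left invariant vector field with value $x$ at the unit. *)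

theory Defs
  imports "HOL-Analysis.Analysis"
begin

definition lie_algebra :: "('a::real_vector \<Rightarrow> 'a \<Rightarrow> 'a) \<Rightarrow> bool" where
  "lie_algebra br \<longleftrightarrow>
     (\<forall>x. linear (br x)) \<and> (\<forall>y. linear (\<lambda>x. br x y)) \<and>
     (\<forall>x. br x x = 0) \<and>
     (\<forall>x y z. br x (br y z) + br y (br z x) + br z (br x y) = 0)"

definition lie_center :: "('a \<Rightarrow> 'a \<Rightarrow> 'a::real_vector) \<Rightarrow> 'a set" where
  "lie_center br = {z. \<forall>x. br z x = 0}"

definition nilpotent_step3 :: "('a \<Rightarrow> 'a \<Rightarrow> 'a::real_vector) \<Rightarrow> bool" where
  "nilpotent_step3 br \<longleftrightarrow> (\<forall>x y z w. br w (br z (br x y)) = 0)"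

end

theory Submission
  imports Defs
begin

text \<open>Let \<open>P\<close> be a linear projection onto the derived algebra \<open>D = [G,G]\<close>. Step 3 nilpotency
  makes \<open>D\<close> abelian and \<open>[G,D]\<close> central. Take \<open>f = (2/3)(id - P/3)\<close> and \<open>d = id + P/3\<close>: the
  \<open>P\<close>-terms of \<open>[dx,fy] + [fx,dy]\<close> cancel, so both sides of the derivation identity equal
  \<open>(4/3)[x,y]\<close>, and \<open>d\<^sup>-\<^sup>1\<close> acts on \<open>D\<close> as \<open>3/4\<close>. Hence
  \<open>xy = [x,y]/2 + ([x,Py] - [Px,y])/6\<close>, and all triple products collapse to
  \<open>(xy)z = [[x,y],z]/6\<close> and \<open>x(yz) = [x,[y,z]]/3\<close>; left symmetry is then the Jacobi identity.\<close>

lemma subspace_has_linear_projection: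
  fixes S :: "'a::real_vector set"
  assumes "subspace S"
  shows "\<exists>P. linear P \<and> (\<forall>x. P x \<in> S) \<and> (\<forall>s\<in>S. P s = s)"
  using linear_exists_left_inverse_on[of id S] assms
  by (metis image_subset_iff linear_id inj_on_id id_apply UNIV_I)

locale step3_nilpotent_lie_algebra =
  fixes br :: "'a::real_vector \<Rightarrow> 'a \<Rightarrow> 'a"
  assumes lie_algebra: "lie_algebra br"
    and nilpotent: "nilpotent_step3 br"
begin

lemma linear_bracket_right: "linear (br x)"
  and linear_bracket_left: "linear (\<lambda>y. br y x)"
  using lie_algebra by (simp_all add: lie_algebra_def)

lemma bilinear_bracket: "bilinear br"
  by (simp add: bilinear_def linear_bracket_right linear_bracket_left)

lemmas bracket_linear_simps =
  bilinear_ladd[OF bilinear_bracket] bilinear_radd[OF bilinear_bracket]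
  bilinear_lsub[OF bilinear_bracket] bilinear_rsub[OF bilinear_bracket]
  bilinear_lmul[OF bilinear_bracket] bilinear_rmul[OF bilinear_bracket]
  bilinear_lneg[OF bilinear_bracket] bilinear_rneg[OF bilinear_bracket]
  bilinear_lzero[OF bilinear_bracket] bilinear_rzero[OF bilinear_bracket]

lemma bracket_self: "br x x = 0"
  using lie_algebra by (simp add: lie_algebra_def)

lemma jacobi: "br x (br y z) + br y (br z x) + br z (br x y) = 0"
  using lie_algebra by (simp add: lie_algebra_def)

lemma bracket_bracket_bracket: "br w (br z (br x y)) = 0"
  using nilpotent by (simp add: nilpotent_step3_def)

lemma bracket_anticomm: "br y x = - br x y"
proof -
  have "0 = br (x + y) (x + y)" by (rule bracket_self[symmetric])
  also have "\<dots> = br x y + br y x" unfolding bracket_linear_simps by (simp add: bracket_self)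
  finally show ?thesis by (metis add.commute eq_neg_iff_add_eq_0)
qed

definition derived :: "'a set" where
  "derived = span {br a b | a b. True}"

lemma subspace_derived: "subspace derived"
  unfolding derived_def by (rule subspace_span)

lemma bracket_in_derived: "br a b \<in> derived"
  unfolding derived_def by (rule span_base) auto

lemma bracket_bracket_derived:
  assumes "s \<in> derived"
  shows "br z (br x s) = 0"
  using assms unfolding derived_def
  by (rule real_vector.linear_eq_0_on_span[
        OF linear_compose[OF linear_bracket_right linear_bracket_right, unfolded o_def], rotated])
    (auto simp: bracket_bracket_bracket)

lemma bracket_derived_central:
  assumes "s \<in> derived"
  shows "br (br x s) z = 0" "br (br s x) z = 0"
  using bracket_bracket_derived[OF assms, of z x] bracket_anticomm[of z] bracket_anticomm[of s x]
  by (simp_all add: bracket_linear_simps)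

lemma bracket_of_brackets: "br (br a b) (br c d) = 0"
proof -
  have "br (br a b) (br c d) = - br c (br d (br a b)) - br d (br (br a b) c)"
    using jacobi[of c d "br a b"] bracket_anticomm[of "br c d" "br a b"]
    by (simp add: algebra_simps eq_neg_iff_add_eq_0)
  also have "\<dots> = 0"
    using bracket_anticomm[of "br a b" c] by (simp add: bracket_bracket_bracket bracket_linear_simps)
  finally show ?thesis .
qed

lemma derived_abelian:
  assumes "s \<in> derived" "t \<in> derived"
  shows "br s t = 0"
proof -
  have generators: "br (br a b) t = 0" for a b
    using assms(2) unfolding derived_def
    by (rule real_vector.linear_eq_0_on_span[OF linear_bracket_right, rotated])
      (auto simp: bracket_of_brackets)
  show ?thesis
    using assms(1) unfolding derived_def
    by (rule real_vector.linear_eq_0_on_span[OF linear_bracket_left, rotated]) (auto simp: generators)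
qed

end

locale step3_nilpotent_lie_algebra_with_projection = step3_nilpotent_lie_algebra +
  fixes P :: "'a \<Rightarrow> 'a"
  assumes linear_P: "linear P"
    and P_in_derived: "P x \<in> derived"
    and P_on_derived: "s \<in> derived \<Longrightarrow> P s = s"
begin

definition f :: "'a \<Rightarrow> 'a" where
  "f x = (2/3) *\<^sub>R x - (2/9) *\<^sub>R P x"

definition d :: "'a \<Rightarrow> 'a" where
  "d x = x + (1/3) *\<^sub>R P x"

definition lsprod :: "'a \<Rightarrow> 'a \<Rightarrow> 'a" where
  "lsprod x y = (1/2) *\<^sub>R br x y + (1/6) *\<^sub>R (br x (P y) - br (P x) y)"

lemmas P_linear_simps = linear_add[OF linear_P] linear_diff[OF linear_P] linear_scale[OF linear_P]

lemma P_idem: "P (P x) = P x"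
  by (simp add: P_in_derived P_on_derived)

lemma bracket_P_P: "br (P x) (P y) = 0"
  by (simp add: P_in_derived derived_abelian)

lemma linear_f: "linear f"
  unfolding f_def by (rule linearI) (simp_all add: P_linear_simps algebra_simps)

lemma linear_d: "linear d"
  unfolding d_def by (rule linearI) (simp_all add: P_linear_simps algebra_simps)

lemma inv_d: "inv d = (\<lambda>x. x - (1/4) *\<^sub>R P x)" and bij_d: "bij d"
proof -
  let ?e = "\<lambda>x. x - (1/4) *\<^sub>R P x"
  have ed: "?e (d x) = x" and de: "d (?e x) = x" for x
    by (simp_all add: d_def P_linear_simps P_idem algebra_simps flip: scaleR_add_left)
  show "inv d = ?e"
    by (rule inv_unique_comp) (auto simp: ed de)
  show "bij d"
    by (rule bij_betw_byWitness[of UNIV ?e]) (auto simp: ed de)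
qed

lemma inv_d_derived: "s \<in> derived \<Longrightarrow> inv d s = (3/4) *\<^sub>R s"
  by (simp add: inv_d P_on_derived algebra_simps flip: scaleR_add_left)

lemma f_hom_mod_center: "f (br x y) - br (f x) (f y) \<in> lie_center br"
proof -
  have "f (br x y) - br (f x) (f y) = (4/27) *\<^sub>R (br x (P y) + br (P x) y)"
    by (simp add: f_def P_on_derived bracket_in_derived bracket_linear_simps bracket_P_P
        algebra_simps flip: scaleR_add_left)
  then show ?thesis
    by (simp add: lie_center_def bracket_linear_simps bracket_derived_central P_in_derived)
qed

lemma d_derivation: "d (br x y) = br (d x) (f y) + br (f x) (d y)"
proof -
  have "d (br x y) = (1 + 1/3) *\<^sub>R br x y"
    by (simp only: d_def P_on_derived bracket_in_derived scaleR_add_left scaleR_one)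
  then show ?thesis
    by (simp add: f_def d_def bracket_linear_simps bracket_P_P algebra_simps flip: scaleR_add_left)
qed

lemma lsprod_in_derived: "lsprod x y \<in> derived"
  unfolding lsprod_def
  by (intro subspace_add subspace_diff subspace_scale subspace_derived bracket_in_derived)

lemma lsprod_derived_left:
  assumes "u \<in> derived"
  shows "lsprod u z = (1/3) *\<^sub>R br u z"
proof -
  have "lsprod u z = (1/2) *\<^sub>R br u z - (1/6) *\<^sub>R br u z"
    using assms by (simp add: lsprod_def P_on_derived derived_abelian P_in_derived)
  then show ?thesis by (simp flip: scaleR_diff_left)
qed

lemma lsprod_derived_right:
  assumes "u \<in> derived"
  shows "lsprod x u = (2/3) *\<^sub>R br x u"
proof -
  have "lsprod x u = (1/2) *\<^sub>R br x u + (1/6) *\<^sub>R br x u"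
    using assms by (simp add: lsprod_def P_on_derived derived_abelian P_in_derived)
  then show ?thesis by (simp flip: scaleR_add_left)
qed

lemma product_eq_lsprod: "inv d (br (f x) (d y)) = lsprod x y"
proof -
  have "br (f x) (d y) = (4/3) *\<^sub>R lsprod x y"
    by (simp add: f_def d_def lsprod_def bracket_linear_simps bracket_P_P
        algebra_simps flip: scaleR_add_left)
  then show ?thesis
    using inv_d_derived[OF subspace_scale[OF subspace_derived lsprod_in_derived]] by simp
qed

lemma lsprod_lsprod_left: "lsprod (lsprod x y) z = (1/6) *\<^sub>R br (br x y) z"
proof -
  have "br (lsprod x y) z = (1/2) *\<^sub>R br (br x y) z"
    by (simp add: lsprod_def bracket_linear_simps bracket_derived_central P_in_derived)
  then show ?thesis
    by (simp add: lsprod_derived_left[OF lsprod_in_derived])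
qed

lemma lsprod_lsprod_right: "lsprod x (lsprod y z) = (1/3) *\<^sub>R br x (br y z)"
proof -
  have "br x (lsprod y z) = (1/2) *\<^sub>R br x (br y z)"
    using bracket_anticomm[of "P y" z]
    by (simp add: lsprod_def bracket_linear_simps bracket_bracket_derived P_in_derived)
  then show ?thesis
    by (simp add: lsprod_derived_right[OF lsprod_in_derived])
qed

lemma lsprod_left_symmetric:
  "lsprod (lsprod x y) z - lsprod x (lsprod y z) = lsprod (lsprod y x) z - lsprod y (lsprod x z)"
proof -
  have "br x (br y z) - br y (br x z) = br (br x y) z"
    using jacobi[of x y z] bracket_anticomm[of x z] bracket_anticomm[of z "br x y"]
    by (simp add: bracket_linear_simps algebra_simps)
  moreover have "br (br y x) z = - br (br x y) z"
    by (simp add: bracket_anticomm[of y x] bracket_linear_simps)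
  ultimately show ?thesis
    by (simp add: lsprod_lsprod_left lsprod_lsprod_right algebra_simps flip: scaleR_add_left)
qed

lemma lsprod_commutator: "lsprod x y - lsprod y x = br x y"
  unfolding lsprod_def
  by (simp add: bracket_anticomm[of y x] bracket_anticomm[of "P y" x] bracket_anticomm[of y "P x"]
      bracket_linear_simps algebra_simps flip: scaleR_add_left)

end

theorem mainTheorem16:
  fixes br :: "'a::euclidean_space \<Rightarrow> 'a \<Rightarrow> 'a"
  assumes "lie_algebra br"
    and "nilpotent_step3 br"
  shows "\<exists>f d. linear f \<and> (\<forall>x y. f (br x y) - br (f x) (f y) \<in> lie_center br) \<and>
           linear d \<and> bij d \<and>
           (\<forall>x y. d (br x y) = br (d x) (f y) + br (f x) (d y)) \<and>
           (let prod = (\<lambda>x y. inv d (br (f x) (d y))) in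
              (\<forall>x y z. prod (prod x y) z - prod x (prod y z) = prod (prod y x) z - prod y (prod x z)) \<and>
              (\<forall>x y. prod x y - prod y x = br x y))"
proof -
  interpret step3_nilpotent_lie_algebra br
    using assms by unfold_locales
  obtain P where "linear P" "\<forall>x. P x \<in> derived" "\<forall>s\<in>derived. P s = s"
    using subspace_has_linear_projection[OF subspace_derived] by blast
  then interpret step3_nilpotent_lie_algebra_with_projection br P
    by unfold_locales (auto simp: linear_add linear_scale)
  have product: "(\<lambda>x y. inv d (br (f x) (d y))) = lsprod"
    by (simp add: fun_eq_iff product_eq_lsprod)
  show ?thesis
    by (rule exI[of _ f], rule exI[of _ d], unfold Let_def product)
      (simp add: linear_f f_hom_mod_center linear_d bij_d d_derivation
        lsprod_left_symmetric lsprod_commutator)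
qed

end
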